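(* Let $t,\Delta\in\mathbb{N}$. If $A$ $(t,\Delta)$-approximates $B$ and $B$ $(t,\Delta)$-approximates $C$, then $A$ $(t,\Delta)$-approximates $C$.
   Context: $\mathbb{N}=\{0,1,2,\dots\}$, $[t]=\{0,1,\dots,t\}$. For $A\subseteq[t]$ and $b\in\mathbb{N}$ define $\mathrm{apx}^-_t(b,A)=\max\{a\in A\cup\{t+1\}: a\le b\}$ and $\mathrm{apx}^+_t(b,A)=\min\{a\in A\cup\{t+1\}: a\ge b\}$, with $\max\emptyset=-\infty$, $\min\emptyset=\infty$. For $A,B\subseteq\mathbb{N}$, $A$ $(t,\Delta)$-approximates $B$ if $A\subseteq B\subseteq[t]$ and for every $b\in B$, $\mathrm{apx}^+_t(b,A)-\mathrm{apx}^-_t(b,A)\le\Delta$. *)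

theory Defs
  imports "HOL-Library.Extended_Real"
begin

text \<open>[t] = {0..t}. Values of apx are taken in the extended reals so that
  max of the empty set is -\<infinity> and min of the empty set is \<infinity>.\<close>

definition apx_minus :: "nat \<Rightarrow> nat \<Rightarrow> nat set \<Rightarrow> ereal" where
  "apx_minus t b A = Sup ((\<lambda>a. ereal (real a)) ` {a \<in> A \<union> {t+1}. a \<le> b})"

definition apx_plus :: "nat \<Rightarrow> nat \<Rightarrow> nat set \<Rightarrow> ereal" where
  "apx_plus t b A = Inf ((\<lambda>a. ereal (real a)) ` {a \<in> A \<union> {t+1}. b \<le> a})"

definition approximates :: "nat \<Rightarrow> nat \<Rightarrow> nat set \<Rightarrow> nat set \<Rightarrow> bool" where
  "approximates t \<Delta> A B \<longleftrightarrow> A \<subseteq> B \<and> B \<subseteq> {0..t} \<and>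
     (\<forall>b\<in>B. apx_plus t b A - apx_minus t b A \<le> ereal (real \<Delta>))"

end

theory Submission
  imports Defs
begin

text \<open>Write \<open>A\<^sup>+\<close> for \<open>A \<union> {t+1}\<close>. The condition on \<open>b\<close> in the definition of approximation
  says exactly that \<open>b\<close> lies between two elements \<open>l \<le> b \<le> u\<close> of \<open>A\<^sup>+\<close> with \<open>u - l \<le> \<Delta>\<close>.
  Given \<open>c \<in> C\<close>, take its nearest neighbours \<open>l \<le> c \<le> u\<close> in \<open>B\<^sup>+\<close>; they are at most \<open>\<Delta>\<close>
  apart. If both lie in \<open>A\<^sup>+\<close> we are done. Otherwise, say \<open>l \<notin> A\<^sup>+\<close>; then \<open>l\<close> is enclosed
  by \<open>l' < l < u'\<close> from \<open>A\<^sup>+ \<subseteq> B\<^sup>+\<close> with \<open>u' - l' \<le> \<Delta>\<close>, and since no element of \<open>B\<^sup>+\<close> lies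
  strictly between \<open>l\<close> and \<open>c\<close>, also \<open>c \<le> u'\<close>, so \<open>l', u'\<close> enclose \<open>c\<close>.\<close>

definition bracketed :: "nat \<Rightarrow> nat set \<Rightarrow> nat \<Rightarrow> bool" where
  "bracketed \<Delta> S b \<longleftrightarrow> (\<exists>l\<in>S. \<exists>u\<in>S. l \<le> b \<and> b \<le> u \<and> u \<le> l + \<Delta>)"

lemma bracketed_self: "b \<in> S \<Longrightarrow> bracketed \<Delta> S b"
  unfolding bracketed_def by force

lemma Sup_image_ereal_nat:
  fixes S :: "nat set"
  assumes "finite S" "S \<noteq> {}"
  shows "Sup ((\<lambda>a. ereal (real a)) ` S) = ereal (real (Max S))"
proof (rule antisym)
  show "Sup ((\<lambda>a. ereal (real a)) ` S) \<le> ereal (real (Max S))"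
    using assms by (auto intro!: Sup_least)
  show "ereal (real (Max S)) \<le> Sup ((\<lambda>a. ereal (real a)) ` S)"
    using assms by (intro Sup_upper imageI Max_in)
qed

lemma Inf_image_ereal_nat:
  fixes S :: "nat set"
  assumes "S \<noteq> {}"
  shows "Inf ((\<lambda>a. ereal (real a)) ` S) = ereal (real (Inf S))"
proof (rule antisym)
  show "Inf ((\<lambda>a. ereal (real a)) ` S) \<le> ereal (real (Inf S))"
    using assms by (intro Inf_lower imageI Inf_nat_def1)
  show "ereal (real (Inf S)) \<le> Inf ((\<lambda>a. ereal (real a)) ` S)"
    by (auto intro!: Inf_greatest cInf_lower)
qed

lemma apx_gap_le_iff_bracketed:
  assumes "b \<le> t + 1"
  shows "apx_plus t b A - apx_minus t b A \<le> ereal (real \<Delta>) \<longleftrightarrow> bracketed \<Delta> (A \<union> {t+1}) b"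
proof -
  define below where "below = {a \<in> A \<union> {t+1}. a \<le> b}"
  define above where "above = {a \<in> A \<union> {t+1}. b \<le> a}"
  have "above \<noteq> {}"
    using assms unfolding above_def by auto
  then have plus: "apx_plus t b A = ereal (real (Inf above))"
    unfolding apx_plus_def above_def[symmetric] by (rule Inf_image_ereal_nat)
  have Inf_above: "Inf above \<in> above" "\<And>u. u \<in> above \<Longrightarrow> Inf above \<le> u"
    using \<open>above \<noteq> {}\<close> by (auto intro: Inf_nat_def1 cInf_lower)
  show ?thesis
  proof (cases "below = {}")
    case True
    then have "apx_minus t b A = -\<infinity>"
      unfolding apx_minus_def below_def[symmetric] by (simp add: bot_ereal_def)
    moreover from True have "\<not> bracketed \<Delta> (A \<union> {t+1}) b"
      unfolding below_def bracketed_def by auto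
    ultimately show ?thesis
      using plus by simp
  next
    case False
    have "finite below"
      unfolding below_def by (rule finite_subset[of _ "{..b}"]) auto
    then have minus: "apx_minus t b A = ereal (real (Max below))"
      unfolding apx_minus_def below_def[symmetric] using False by (rule Sup_image_ereal_nat)
    have Max_below: "Max below \<in> below" "\<And>l. l \<in> below \<Longrightarrow> l \<le> Max below"
      using \<open>finite below\<close> False by auto
    have "apx_plus t b A - apx_minus t b A \<le> ereal (real \<Delta>) \<longleftrightarrow> Inf above \<le> Max below + \<Delta>"
      using plus minus by (simp add: diff_le_eq add.commute flip: of_nat_add)
    also have "\<dots> \<longleftrightarrow> bracketed \<Delta> (A \<union> {t+1}) b"
    proof
      assume "Inf above \<le> Max below + \<Delta>"
      then show "bracketed \<Delta> (A \<union> {t+1}) b"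
        using Max_below(1) Inf_above(1) unfolding bracketed_def below_def above_def by blast
    next
      assume "bracketed \<Delta> (A \<union> {t+1}) b"
      then obtain l u where "l \<in> below" "u \<in> above" "u \<le> l + \<Delta>"
        unfolding bracketed_def below_def above_def by blast
      then show "Inf above \<le> Max below + \<Delta>"
        using Max_below(2) Inf_above(2) by fastforce
    qed
    finally show ?thesis .
  qed
qed

lemma approximates_iff_bracketed:
  "approximates t \<Delta> A B \<longleftrightarrow>
     A \<subseteq> B \<and> B \<subseteq> {0..t} \<and> (\<forall>b\<in>B. bracketed \<Delta> (A \<union> {t+1}) b)"
proof -
  have "B \<subseteq> {0..t} \<Longrightarrow> b \<in> B \<Longrightarrow> b \<le> t + 1" for b
    by auto
  then show ?thesis
    unfolding approximates_def using apx_gap_le_iff_bracketed by blast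
qed

lemma bracketed_nearest:
  assumes "bracketed \<Delta> T c"
  obtains l u where "l \<in> T" "u \<in> T" "l \<le> c" "c \<le> u" "u \<le> l + \<Delta>"
    "\<And>x. x \<in> T \<Longrightarrow> x \<le> c \<Longrightarrow> x \<le> l" "\<And>x. x \<in> T \<Longrightarrow> c \<le> x \<Longrightarrow> u \<le> x"
proof -
  from assms obtain l0 u0 where l0u0: "l0 \<in> T" "u0 \<in> T" "l0 \<le> c" "c \<le> u0" "u0 \<le> l0 + \<Delta>"
    unfolding bracketed_def by blast
  define below where "below = {x \<in> T. x \<le> c}"
  define above where "above = {x \<in> T. c \<le> x}"
  have "finite below" "below \<noteq> {}" "above \<noteq> {}"
    using l0u0 unfolding below_def above_def by (auto intro: finite_subset[of _ "{..c}"])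
  then have "Max below \<in> below" "Inf above \<in> above"
    "\<And>x. x \<in> below \<Longrightarrow> x \<le> Max below" "\<And>x. x \<in> above \<Longrightarrow> Inf above \<le> x"
    by (auto intro: Inf_nat_def1 cInf_lower)
  moreover from this have "Inf above \<le> Max below + \<Delta>"
    using l0u0 unfolding below_def above_def by fastforce
  ultimately show ?thesis
    using that[of "Max below" "Inf above"] unfolding below_def above_def by blast
qed

lemma bracketed_trans:
  assumes "S \<subseteq> T" and T_bracketed: "\<And>b. b \<in> T \<Longrightarrow> bracketed \<Delta> S b" and "bracketed \<Delta> T c"
  shows "bracketed \<Delta> S c"
proof -
  obtain l u where lu: "l \<in> T" "u \<in> T" "l \<le> c" "c \<le> u" "u \<le> l + \<Delta>"
    and nearest: "\<And>x. x \<in> T \<Longrightarrow> x \<le> c \<Longrightarrow> x \<le> l" "\<And>x. x \<in> T \<Longrightarrow> c \<le> x \<Longrightarrow> u \<le> x"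
    using bracketed_nearest[OF \<open>bracketed \<Delta> T c\<close>] by blast
  consider "l \<in> S" "u \<in> S" | "l \<notin> S" | "u \<notin> S"
    by blast
  then show ?thesis
  proof cases
    case 1
    with lu show ?thesis
      unfolding bracketed_def by blast
  next
    case 2
    from T_bracketed[OF \<open>l \<in> T\<close>] obtain l' u' where
      "l' \<in> S" "u' \<in> S" "l' \<le> l" "l \<le> u'" "u' \<le> l' + \<Delta>"
      unfolding bracketed_def by blast
    moreover from this \<open>l \<notin> S\<close> \<open>S \<subseteq> T\<close> have "c \<le> u'"
      using nearest(1)[of u'] by force
    ultimately show ?thesis
      using \<open>l \<le> c\<close> unfolding bracketed_def by (blast intro: le_trans)
  next
    case 3
    from T_bracketed[OF \<open>u \<in> T\<close>] obtain l' u' where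
      "l' \<in> S" "u' \<in> S" "l' \<le> u" "u \<le> u'" "u' \<le> l' + \<Delta>"
      unfolding bracketed_def by blast
    moreover from this \<open>u \<notin> S\<close> \<open>S \<subseteq> T\<close> have "l' \<le> c"
      using nearest(2)[of l'] by force
    ultimately show ?thesis
      using \<open>c \<le> u\<close> unfolding bracketed_def by (blast intro: le_trans)
  qed
qed

theorem lemma4p2:
  fixes t \<Delta> :: nat and A B C :: "nat set"
  assumes "approximates t \<Delta> A B" and "approximates t \<Delta> B C"
  shows "approximates t \<Delta> A C"
proof -
  from assms have AB: "A \<subseteq> B" "\<And>b. b \<in> B \<Longrightarrow> bracketed \<Delta> (A \<union> {t+1}) b"
    and BC: "B \<subseteq> C" "C \<subseteq> {0..t}" "\<And>c. c \<in> C \<Longrightarrow> bracketed \<Delta> (B \<union> {t+1}) c"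
    unfolding approximates_iff_bracketed by blast+
  have "bracketed \<Delta> (A \<union> {t+1}) b" if "b \<in> B \<union> {t+1}" for b
    using that AB(2) bracketed_self[of "t+1"] by blast
  then have "bracketed \<Delta> (A \<union> {t+1}) c" if "c \<in> C" for c
    using bracketed_trans[of "A \<union> {t+1}" "B \<union> {t+1}"] AB(1) BC(3)[OF that] by blast
  with AB(1) BC(1,2) show ?thesis
    unfolding approximates_iff_bracketed by blast
qed

end
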